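(* Let $d\in\mathbb Z^+$ and define $\mathbb P_{\boldsymbol 0}:=1$, $\mathbb P_{\boldsymbol m}:=\frac{(|\boldsymbol m|+d)!}{\boldsymbol m!\,d!}+\sum_{\boldsymbol w\le\boldsymbol m,\,\boldsymbol w\ne\boldsymbol m}\mathbb P_{\boldsymbol w}(|\boldsymbol m|-|\boldsymbol w|+1)!$ for $\boldsymbol m\in\mathscr F\setminus\{\boldsymbol 0\}$. Let $\tau_0:=1$, $\tau_k:=\sum_{j=0}^{k-1}(k-j+1)\tau_j$ for $k\ge1$. Then $$\mathbb P_{\boldsymbol m}\le\frac{2\,\tau_{|\boldsymbol m|}\,(|\boldsymbol m|+d-1)!}{(d-1)!}\qquad\text{for all }\boldsymbol m\in\mathscr F\setminus\{\boldsymbol 0\}.$$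
   Context: $\mathscr F$ is the set of finitely supported multi-indices in $\mathbb N_0^{\mathbb N}$; $|\boldsymbol m|=\sum m_j$, $\boldsymbol m!=\prod m_j!$, componentwise order. *)

theory Defs
  imports Complex_Main
begin

text \<open>Multi-indices: functions nat => nat with finite support (the set F).
  Componentwise order is the pointwise order on functions.\<close>

definition msupp :: "(nat \<Rightarrow> nat) \<Rightarrow> nat set" where
  "msupp m = {j. m j \<noteq> 0}"

definition fin_multi_index :: "(nat \<Rightarrow> nat) \<Rightarrow> bool" where
  "fin_multi_index m \<longleftrightarrow> finite (msupp m)"

definition mabs :: "(nat \<Rightarrow> nat) \<Rightarrow> nat" where
  "mabs m = (\<Sum>j\<in>msupp m. m j)"

definition mfact :: "(nat \<Rightarrow> nat) \<Rightarrow> nat" where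
  "mfact m = (\<Prod>j\<in>msupp m. fact (m j))"

lemma mabs_less:
  assumes "fin_multi_index m" "w \<le> m" "w \<noteq> m"
  shows "mabs w < mabs m"
proof -
  have sub: "msupp w \<subseteq> msupp m"
    using assms(2) unfolding msupp_def le_fun_def by (auto simp: le_fun_def) (metis less_le_trans)
  have fin: "finite (msupp m)" using assms(1) by (simp add: fin_multi_index_def)
  have "mabs w = (\<Sum>j\<in>msupp m. w j)"
    unfolding mabs_def
    by (rule sum.mono_neutral_left[OF fin sub]) (auto simp: msupp_def)
  moreover obtain i where i: "w i \<noteq> m i" using assms(3) by auto
  then have "w i < m i" using assms(2) by (simp add: le_fun_def order_le_neq_trans)
  then have "i \<in> msupp m" by (auto simp: msupp_def)
  have "(\<Sum>j\<in>msupp m. w j) < (\<Sum>j\<in>msupp m. m j)"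
    by (rule sum_strict_mono_ex1[OF fin])
       (use assms(2) \<open>i \<in> msupp m\<close> \<open>w i < m i\<close> in \<open>auto simp: le_fun_def\<close>)
  ultimately show ?thesis by (simp add: mabs_def)
qed

function PP :: "nat \<Rightarrow> (nat \<Rightarrow> nat) \<Rightarrow> real" where
  "PP d m =
     (if m = (\<lambda>_. 0) then 1
      else if \<not> fin_multi_index m then 0
      else fact (mabs m + d) / (real (mfact m) * fact d)
           + (\<Sum>w\<in>{w. w \<le> m \<and> w \<noteq> m}. PP d w * fact (mabs m - mabs w + 1)))"
  by auto
termination
  by (relation "measure (\<lambda>(d, m). mabs m)") (auto intro: mabs_less)

fun tau :: "nat \<Rightarrow> nat" where
  "tau 0 = 1"
| "tau (Suc k) = (\<Sum>j<Suc k. (Suc k - j + 1) * tau j)"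

end

theory Submission
  imports Defs
begin

text \<open>A multi-index \<open>w\<close> is identified with its set of cells \<open>{(i,k). k < w i}\<close>, a finite set of
  size \<open>|w|\<close>; \<open>w \<le> m\<close> becomes inclusion of cells, so at most \<open>C(|m|, j)\<close> indices below \<open>m\<close>
  have \<open>|w| = j\<close>. Writing \<open>d = e + 1\<close> and \<open>n = |m|\<close>, induction on \<open>n\<close> bounds the level-\<open>j\<close>
  part of the recursion for \<open>P_m\<close> by \<open>C(n,j) \<cdot> 2\<tau>_j (j+e)!/e! \<cdot> (n-j+1)! \<le> 2(n-j+1)\<tau>_j (n+e)!/e!\<close>,
  while the leading term and the term \<open>w = 0\<close> are each at most \<open>(n+1)(n+e)!/e!\<close>; summing
  reproduces exactly the recursion defining \<open>\<tau>_n\<close>.\<close>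

definition mindex_cells :: "(nat \<Rightarrow> nat) \<Rightarrow> (nat \<times> nat) set" where
  "mindex_cells w = {(i, k). k < w i}"

lemma mindex_cells_Sigma: "mindex_cells w = (SIGMA i:msupp w. {..<w i})"
  by (auto simp: mindex_cells_def msupp_def)

lemma inj_mindex_cells: "inj mindex_cells"
proof (rule injI)
  fix w v :: "nat \<Rightarrow> nat"
  assume cells: "mindex_cells w = mindex_cells v"
  show "w = v"
  proof
    fix i
    have "k < w i \<longleftrightarrow> k < v i" for k
      using cells unfolding mindex_cells_def by blast
    then show "w i = v i" by (meson less_irrefl nat_neq_iff)
  qed
qed

lemma mindex_cells_mono: "w \<le> m \<Longrightarrow> mindex_cells w \<subseteq> mindex_cells m"
  by (auto simp: mindex_cells_def le_fun_def intro: less_le_trans)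

lemma finite_mindex_cells: "fin_multi_index w \<Longrightarrow> finite (mindex_cells w)"
  unfolding mindex_cells_Sigma fin_multi_index_def by auto

lemma card_mindex_cells: "fin_multi_index w \<Longrightarrow> card (mindex_cells w) = mabs w"
  unfolding mindex_cells_Sigma fin_multi_index_def mabs_def by simp

lemma fin_multi_index_le: "w \<le> m \<Longrightarrow> fin_multi_index m \<Longrightarrow> fin_multi_index w"
  unfolding fin_multi_index_def msupp_def le_fun_def
  by (rule finite_subset[rotated]) (auto intro: less_le_trans)

lemma mabs_zero [simp]: "mabs (\<lambda>_. 0) = 0"
  by (simp add: mabs_def msupp_def)

lemma mabs_eq_0_iff: "fin_multi_index w \<Longrightarrow> mabs w = 0 \<longleftrightarrow> w = (\<lambda>_. 0)"
proof
  assume "fin_multi_index w" "mabs w = 0"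
  then have "mindex_cells w = {}"
    using card_mindex_cells finite_mindex_cells by fastforce
  then have "mindex_cells w = mindex_cells (\<lambda>_. 0)"
    by (simp add: mindex_cells_def)
  then show "w = (\<lambda>_. 0)"
    using injD[OF inj_mindex_cells] by blast
qed simp

lemma finite_mindex_le:
  assumes "fin_multi_index m"
  shows "finite {w. w \<le> m}"
proof -
  have "mindex_cells ` {w. w \<le> m} \<subseteq> Pow (mindex_cells m)"
    using mindex_cells_mono by auto
  then have "finite (mindex_cells ` {w. w \<le> m})"
    using finite_mindex_cells[OF assms] finite_subset by blast
  then show ?thesis
    using inj_on_subset[OF inj_mindex_cells] finite_imageD by blast
qed

lemma card_mindex_le_mabs_eq:
  assumes "fin_multi_index m"
  shows "card {w. w \<le> m \<and> P w \<and> mabs w = j} \<le> mabs m choose j"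
proof -
  let ?S = "{w. w \<le> m \<and> P w \<and> mabs w = j}"
  have "mindex_cells ` ?S \<subseteq> {B. B \<subseteq> mindex_cells m \<and> card B = j}"
  proof
    fix B assume "B \<in> mindex_cells ` ?S"
    then obtain w where "w \<le> m" "mabs w = j" "B = mindex_cells w" by blast
    then show "B \<in> {B. B \<subseteq> mindex_cells m \<and> card B = j}"
      using assms by (simp add: mindex_cells_mono card_mindex_cells fin_multi_index_le)
  qed
  then have "card (mindex_cells ` ?S) \<le> card {B. B \<subseteq> mindex_cells m \<and> card B = j}"
    by (rule card_mono[rotated]) (simp add: finite_mindex_cells[OF assms])
  also have "\<dots> = card (mindex_cells m) choose j"
    by (rule n_subsets[OF finite_mindex_cells[OF assms]])
  finally have "card (mindex_cells ` ?S) \<le> card (mindex_cells m) choose j" .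
  moreover have "card (mindex_cells ` ?S) = card ?S"
    by (rule card_image[OF inj_on_subset[OF inj_mindex_cells]]) simp
  ultimately show ?thesis by (simp add: card_mindex_cells[OF assms])
qed

lemma fact_mult_fact_add_le:
  "j \<le> n \<Longrightarrow> fact n * fact (j + e) \<le> (fact (n + e) * fact j :: nat)"
proof (induction n rule: dec_induct)
  case base
  then show ?case by (simp add: add.commute mult.commute)
next
  case (step n)
  have "fact (Suc n) * fact (j + e) = Suc n * (fact n * fact (j + e))"
    by (simp add: algebra_simps)
  also have "\<dots> \<le> Suc n * (fact (n + e) * fact j)"
    using step.IH by (rule mult_le_mono2)
  also have "\<dots> \<le> Suc (n + e) * (fact (n + e) * fact j)"
    by simp
  also have "\<dots> = fact (Suc n + e) * fact j"
    by (simp add: algebra_simps)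
  finally show ?case .
qed

lemma binomial_fact_add_le:
  assumes "j \<le> n"
  shows "(n choose j) * fact (j + e) * fact (n - j + 1) \<le> (n - j + 1) * (fact (n + e) :: nat)"
proof -
  have "fact j * ((n choose j) * fact (j + e) * fact (n - j + 1))
      = (n - j + 1) * (fact j * fact (n - j) * (n choose j) * fact (j + e))"
    by (simp add: algebra_simps)
  also have "\<dots> = (n - j + 1) * (fact n * fact (j + e))"
    unfolding binomial_fact_lemma[OF assms] by (simp only: mult.assoc)
  also have "\<dots> \<le> (n - j + 1) * (fact (n + e) * fact j)"
    using fact_mult_fact_add_le[OF assms] by (rule mult_le_mono2)
  also have "\<dots> = fact j * ((n - j + 1) * fact (n + e))"
    by (simp add: algebra_simps)
  finally show ?thesis
    by (simp add: mult_le_cancel1)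
qed

text \<open>The right-hand side of the theorem, written with \<open>d = e + 1\<close>.\<close>

definition tau_bound :: "nat \<Rightarrow> nat \<Rightarrow> real" where
  "tau_bound e n = 2 * real (tau n) * (fact (n + e) / fact e)"

lemma tau_eq_sum_from_1:
  assumes "n \<ge> 1"
  shows "tau n = (n + 1) + (\<Sum>j\<in>{1..<n}. (n - j + 1) * tau j)"
proof -
  obtain k where k: "n = Suc k" using assms by (metis Suc_le_D One_nat_def)
  have "{..<n} = insert 0 {1..<n}" using k by auto
  then show ?thesis using k by (simp only: tau.simps) simp
qed

lemma level_bound_le:
  assumes "j \<le> n"
  shows "real (n choose j) * (tau_bound e j * fact (n - j + 1))
    \<le> 2 * real ((n - j + 1) * tau j) * (fact (n + e) / fact e)"
proof -
  have "real ((n choose j) * fact (j + e) * fact (n - j + 1)) \<le> real ((n - j + 1) * fact (n + e))"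
    using binomial_fact_add_le[OF assms] by (simp only: of_nat_le_iff)
  then have "2 * real (tau j) / fact e * real ((n choose j) * fact (j + e) * fact (n - j + 1))
      \<le> 2 * real (tau j) / fact e * real ((n - j + 1) * fact (n + e))"
    by (rule mult_left_mono) simp
  then show ?thesis
    unfolding tau_bound_def by (simp only: of_nat_mult of_nat_fact mult_ac divide_inverse)
qed

lemma fact_add_div_le:
  fixes k :: nat
  assumes "k \<ge> 1"
  shows "fact (n + Suc e) / (real k * fact (Suc e)) \<le> real (n + 1) * (fact (n + e) / fact e)"
proof -
  have "fact (n + Suc e) / (real k * fact (Suc e)) \<le> fact (n + Suc e) / fact (Suc e)"
    using assms by (intro divide_left_mono) auto
  also have "\<dots> = real (n + e + 1) / real (e + 1) * (fact (n + e) / fact e)"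
    by (simp add: field_simps)
  also have "\<dots> \<le> real (n + 1) * (fact (n + e) / fact e)"
    by (intro mult_right_mono) (simp_all add: field_simps)
  finally show ?thesis .
qed

lemma fact_Suc_le_fact_add_div: "(fact (n + 1) :: real) \<le> real (n + 1) * (fact (n + e) / fact e)"
proof -
  have "fact n * fact e \<le> (fact (n + e) :: nat)"
    using fact_mult_fact_add_le[of 0 n e] by simp
  then have "real (fact n * fact e) \<le> real (fact (n + e))"
    by (simp only: of_nat_le_iff)
  then have "(fact n :: real) \<le> fact (n + e) / fact e"
    by (simp add: field_simps)
  then have "real (n + 1) * fact n \<le> real (n + 1) * (fact (n + e) / fact e)"
    by (rule mult_left_mono) simp
  then show ?thesis
    by (simp only: Suc_eq_plus1[symmetric] fact_Suc)
qed

lemma PP_zero: "PP d (\<lambda>_. 0) = 1"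
  by (subst PP.simps) simp

lemma PP_nonzero:
  assumes "fin_multi_index m" "m \<noteq> (\<lambda>_. 0)"
  shows "PP d m = fact (mabs m + d) / (real (mfact m) * fact d) + fact (mabs m + 1)
    + (\<Sum>w\<in>{w. w \<le> m \<and> w \<noteq> m \<and> w \<noteq> (\<lambda>_. 0)}. PP d w * fact (mabs m - mabs w + 1))"
proof -
  have "{w. w \<le> m \<and> w \<noteq> m} = insert (\<lambda>_. 0) {w. w \<le> m \<and> w \<noteq> m \<and> w \<noteq> (\<lambda>_. 0)}"
    using assms(2) by (auto simp: le_fun_def)
  moreover have "finite {w. w \<le> m \<and> w \<noteq> m \<and> w \<noteq> (\<lambda>_. 0)}"
    using finite_mindex_le[OF assms(1)] by (rule finite_subset[rotated]) auto
  ultimately show ?thesis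
    using assms by (subst PP.simps) (simp add: PP_zero)
qed

declare PP.simps [simp del]

lemma mfact_ge_1: "mfact m \<ge> 1"
  unfolding mfact_def by (simp add: Suc_le_eq prod_pos)

lemma sum_PP_below_le:
  assumes m: "fin_multi_index m"
    and IH: "\<And>w. w \<le> m \<Longrightarrow> w \<noteq> m \<Longrightarrow> PP (Suc e) w \<le> tau_bound e (mabs w)"
  defines "n \<equiv> mabs m"
  shows "(\<Sum>w\<in>{w. w \<le> m \<and> w \<noteq> m \<and> w \<noteq> (\<lambda>_. 0)}. PP (Suc e) w * fact (n - mabs w + 1))
    \<le> (\<Sum>j\<in>{1..<n}. 2 * real ((n - j + 1) * tau j) * (fact (n + e) / fact e))"
proof -
  define A where "A = {w. w \<le> m \<and> w \<noteq> m \<and> w \<noteq> (\<lambda>_. 0)}"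
  let ?g = "\<lambda>w. PP (Suc e) w * fact (n - mabs w + 1)"
  have fin_A: "finite A"
    unfolding A_def using finite_mindex_le[OF m] by (rule finite_subset[rotated]) auto
  have levels: "mabs ` A \<subseteq> {1..<n}"
  proof
    fix k assume "k \<in> mabs ` A"
    then obtain w where w: "w \<le> m" "w \<noteq> m" "w \<noteq> (\<lambda>_. 0)" "k = mabs w"
      by (auto simp: A_def)
    then have "mabs w \<noteq> 0"
      using mabs_eq_0_iff fin_multi_index_le[OF _ m] by blast
    with w show "k \<in> {1..<n}"
      using mabs_less[OF m] by (simp add: n_def)
  qed
  have level_le: "(\<Sum>w\<in>{w \<in> A. mabs w = j}. ?g w)
      \<le> 2 * real ((n - j + 1) * tau j) * (fact (n + e) / fact e)" if j: "j \<in> {1..<n}" for j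
  proof -
    let ?c = "tau_bound e j * fact (n - j + 1)"
    have "(\<Sum>w\<in>{w \<in> A. mabs w = j}. ?g w) \<le> (\<Sum>w\<in>{w \<in> A. mabs w = j}. ?c)"
      using IH by (intro sum_mono mult_right_mono) (auto simp: A_def)
    also have "\<dots> = real (card {w \<in> A. mabs w = j}) * ?c"
      by simp
    also have "\<dots> \<le> real (n choose j) * ?c"
    proof (rule mult_right_mono)
      have "{w \<in> A. mabs w = j} = {w. w \<le> m \<and> (w \<noteq> m \<and> w \<noteq> (\<lambda>_. 0)) \<and> mabs w = j}"
        unfolding A_def by auto
      then show "real (card {w \<in> A. mabs w = j}) \<le> real (n choose j)"
        using card_mindex_le_mabs_eq[OF m, of "\<lambda>w. w \<noteq> m \<and> w \<noteq> (\<lambda>_. 0)" j]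
        by (simp only: n_def of_nat_le_iff)
    qed (simp add: tau_bound_def)
    also have "\<dots> \<le> 2 * real ((n - j + 1) * tau j) * (fact (n + e) / fact e)"
      using j by (intro level_bound_le) simp
    finally show ?thesis .
  qed
  have "(\<Sum>w\<in>A. ?g w) = (\<Sum>j\<in>{1..<n}. \<Sum>w\<in>{w \<in> A. mabs w = j}. ?g w)"
    using sum.group[OF fin_A _ levels, of ?g] by simp
  also have "\<dots> \<le> (\<Sum>j\<in>{1..<n}. 2 * real ((n - j + 1) * tau j) * (fact (n + e) / fact e))"
    by (rule sum_mono) (rule level_le)
  finally show ?thesis unfolding A_def .
qed

lemma PP_Suc_le_tau_bound:
  "fin_multi_index m \<Longrightarrow> PP (Suc e) m \<le> tau_bound e (mabs m)"
proof (induction "mabs m" arbitrary: m rule: less_induct)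
  case less
  show ?case
  proof (cases "m = (\<lambda>_. 0)")
    case True
    then show ?thesis by (simp add: PP_zero tau_bound_def)
  next
    case False
    define n where "n = mabs m"
    define K where "K = (fact (n + e) / fact e :: real)"
    have n: "n \<ge> 1"
      using False less.prems mabs_eq_0_iff by (fastforce simp: n_def)
    have IH: "PP (Suc e) w \<le> tau_bound e (mabs w)" if "w \<le> m" "w \<noteq> m" for w
      using less that by (meson fin_multi_index_le mabs_less)
    have "PP (Suc e) m \<le> real (n + 1) * K + real (n + 1) * K
        + (\<Sum>j\<in>{1..<n}. 2 * real ((n - j + 1) * tau j) * K)"
      using PP_nonzero[OF less.prems False, of "Suc e"] sum_PP_below_le[OF less.prems IH]
        fact_add_div_le[OF mfact_ge_1, of n e m] fact_Suc_le_fact_add_div[of n e]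
      unfolding K_def n_def by linarith
    also have "\<dots> = tau_bound e n"
      by (simp add: tau_eq_sum_from_1[OF n] tau_bound_def K_def sum_distrib_left
          sum_distrib_right algebra_simps add_divide_distrib)
    finally show ?thesis by (simp add: n_def)
  qed
qed

theorem lemmaA7:
  fixes d :: nat and m :: "nat \<Rightarrow> nat"
  assumes "d \<ge> 1"
    and "fin_multi_index m"
    and "m \<noteq> (\<lambda>_. 0)"
  shows "PP d m \<le> 2 * real (tau (mabs m)) * fact (mabs m + d - 1) / fact (d - 1)"
proof -
  obtain e where "d = Suc e"
    using assms(1) by (metis Suc_le_D One_nat_def)
  then show ?thesis
    using PP_Suc_le_tau_bound[OF assms(2)] by (simp add: tau_bound_def)
qed

end
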